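(* Let $H\in(\tfrac12,1)$, $\sigma>0$. Then $\bar{\mathcal{Y}}_n^H\to0$ in $L^2$ as $n\to\infty$.
   Context: $c_H=\sqrt{\frac{2H\,\Gamma(\frac32-H)}{\Gamma(H+\frac12)\Gamma(2-2H)}}$, $C_H=c_H(H-\frac12)$, and for integers $1\le i<n$, $j_n^H(i)=\sigma C_H\int_{i-1}^i x^{\frac12-H}\Big(\int_0^1(v+n-1)^{H-\frac12}(v+n-1-x)^{H-\frac32}dv\Big)dx$. For $n\ge2$ let $x_n=n-1-\Big(\big(1+\frac1{n-1}\big)^{\frac2{3-2H}}-1\Big)^{-1}\in(0,n-1)$ and $i_n=\lfloor x_n\rfloor+1$. Let $(\xi_i)_{i\ge1}$ be i.i.d. with $P(\xi_i=\pm1)=\frac12$ and $\bar{\mathcal{Y}}_n^H=\sum_{i=1}^{i_n-1}j_n^H(i)\xi_i$. *)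

theory Defs
  imports "HOL-Probability.Probability"
begin

definition c_H :: "real \<Rightarrow> real" where
  "c_H H = sqrt (2 * H * Gamma (3/2 - H) / (Gamma (H + 1/2) * Gamma (2 - 2 * H)))"

definition C_H :: "real \<Rightarrow> real" where
  "C_H H = c_H H * (H - 1/2)"

definition jnH :: "real \<Rightarrow> real \<Rightarrow> nat \<Rightarrow> nat \<Rightarrow> real" where
  "jnH \<sigma> H n i = \<sigma> * C_H H *
     (LBINT x=real i - 1..real i. x powr (1/2 - H) *
        (LBINT v=0..1. (v + real n - 1) powr (H - 1/2) * (v + real n - 1 - x) powr (H - 3/2)))"

definition x_seq :: "real \<Rightarrow> nat \<Rightarrow> real" where
  "x_seq H n = real n - 1 - inverse ((1 + 1 / (real n - 1)) powr (2 / (3 - 2 * H)) - 1)"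

definition i_seq :: "real \<Rightarrow> nat \<Rightarrow> nat" where
  "i_seq H n = nat \<lfloor>x_seq H n\<rfloor> + 1"

definition Ybar :: "real \<Rightarrow> real \<Rightarrow> (nat \<Rightarrow> 'a \<Rightarrow> real) \<Rightarrow> nat \<Rightarrow> 'a \<Rightarrow> real" where
  "Ybar \<sigma> H \<xi> n \<omega> = (\<Sum>i = 1..i_seq H n - 1. jnH \<sigma> H n i * \<xi> i \<omega>)"

end

theory Submission
  imports Defs "HOL-Real_Asymp.Real_Asymp"
begin

text \<open>
  The Rademacher variables are orthonormal, so the second moment of \<open>Ybar n\<close> is the sum of
  the squared coefficients \<open>j_n(i)\<close>, \<open>i < i_n\<close>. Since \<open>i_n - 1 \<le> x_n \<le> 2(n - 1)/3\<close>, the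
  inner variable in \<open>j_n(i)\<close> stays at distance at least \<open>n/6\<close> from the singularity, so the
  inner integral is \<open>O(n\<^bsup>2H-2\<^esup>)\<close> uniformly and \<open>|j_n(i)| = O(n\<^bsup>2H-2\<^esup> (i - 1)\<^bsup>1/2-H\<^esup>)\<close>.
  Summing the squares gives \<open>O(n\<^bsup>4H-4\<^esup> n\<^bsup>2-2H\<^esup>) = O(n\<^bsup>2H-2\<^esup>)\<close>, which tends to \<open>0\<close>.
\<close>

lemma (in prob_space) AE_Rademacher:
  fixes X :: "'a \<Rightarrow> real"
  assumes [measurable]: "X \<in> borel_measurable M"
    and "\<P>(\<omega> in M. X \<omega> = 1) = 1/2" "\<P>(\<omega> in M. X \<omega> = -1) = 1/2"
  shows "AE \<omega> in M. X \<omega> = 1 \<or> X \<omega> = -1"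
proof -
  have "{\<omega>\<in>space M. X \<omega> = 1 \<or> X \<omega> = -1} = {\<omega>\<in>space M. X \<omega> = 1} \<union> {\<omega>\<in>space M. X \<omega> = -1}"
    by auto
  then have "\<P>(\<omega> in M. X \<omega> = 1 \<or> X \<omega> = -1) = \<P>(\<omega> in M. X \<omega> = 1) + \<P>(\<omega> in M. X \<omega> = -1)"
    by (simp only:) (rule finite_measure_Union, auto)
  with assms(2,3) have "\<P>(\<omega> in M. X \<omega> = 1 \<or> X \<omega> = -1) = 1"
    by simp
  then show ?thesis
    by (subst (asm) prob_Collect_eq_1) auto
qed

lemma (in prob_space) expectation_Rademacher:
  fixes X :: "'a \<Rightarrow> real"
  assumes [measurable]: "X \<in> borel_measurable M"
    and p1: "\<P>(\<omega> in M. X \<omega> = 1) = 1/2" and pm1: "\<P>(\<omega> in M. X \<omega> = -1) = 1/2"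
  shows "expectation X = 0"
proof -
  have "AE \<omega> in M. X \<omega> = 1 \<or> X \<omega> = -1"
    using AE_Rademacher assms by blast
  then have "expectation X
      = expectation (\<lambda>\<omega>. indicator {\<omega>\<in>space M. X \<omega> = 1} \<omega> - indicator {\<omega>\<in>space M. X \<omega> = -1} \<omega>)"
    by (intro integral_cong_AE) (auto simp: indicator_def)
  also have "\<dots> = prob {\<omega>\<in>space M. X \<omega> = 1} - prob {\<omega>\<in>space M. X \<omega> = -1}"
    by (subst Bochner_Integration.integral_diff)
       (auto intro!: integrable_real_indicator simp: Int_absorb2 less_top[symmetric])
  finally show ?thesis
    using p1 pm1 by simp
qed

lemma (in prob_space) expectation_square_sum_orthonormal:
  fixes X :: "'i \<Rightarrow> 'a \<Rightarrow> real"
  assumes "finite J"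
    and "\<And>i k. i \<in> J \<Longrightarrow> k \<in> J \<Longrightarrow> integrable M (\<lambda>\<omega>. X i \<omega> * X k \<omega>)"
    and "\<And>i k. i \<in> J \<Longrightarrow> k \<in> J \<Longrightarrow> expectation (\<lambda>\<omega>. X i \<omega> * X k \<omega>) = (if i = k then 1 else 0)"
  shows "expectation (\<lambda>\<omega>. (\<Sum>i\<in>J. a i * X i \<omega>)\<^sup>2) = (\<Sum>i\<in>J. (a i)\<^sup>2)"
proof -
  have "(\<lambda>\<omega>. (\<Sum>i\<in>J. a i * X i \<omega>)\<^sup>2) = (\<lambda>\<omega>. \<Sum>i\<in>J. \<Sum>k\<in>J. a i * a k * (X i \<omega> * X k \<omega>))"
    by (auto simp: power2_eq_square sum_product mult_ac)
  then have "expectation (\<lambda>\<omega>. (\<Sum>i\<in>J. a i * X i \<omega>)\<^sup>2)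
      = (\<Sum>i\<in>J. \<Sum>k\<in>J. a i * a k * expectation (\<lambda>\<omega>. X i \<omega> * X k \<omega>))"
    using assms(2) by (simp add: Bochner_Integration.integral_sum integrable_sum)
  also have "\<dots> = (\<Sum>i\<in>J. \<Sum>k\<in>J. a i * a k * (if i = k then 1 else 0))"
    using assms(3) by (intro sum.cong refl) auto
  also have "\<dots> = (\<Sum>i\<in>J. (a i)\<^sup>2)"
    using assms(1) by (simp add: power2_eq_square if_distrib cong: if_cong)
  finally show ?thesis .
qed

lemma (in prob_space) expectation_square_sum_Rademacher:
  fixes \<xi> :: "'i \<Rightarrow> 'a \<Rightarrow> real"
  assumes indep: "indep_vars (\<lambda>_. borel) \<xi> I" and "finite J" "J \<subseteq> I"
    and meas: "\<And>i. i \<in> I \<Longrightarrow> \<xi> i \<in> borel_measurable M"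
    and p1: "\<And>i. i \<in> I \<Longrightarrow> \<P>(\<omega> in M. \<xi> i \<omega> = 1) = 1/2"
    and pm1: "\<And>i. i \<in> I \<Longrightarrow> \<P>(\<omega> in M. \<xi> i \<omega> = -1) = 1/2"
  shows "expectation (\<lambda>\<omega>. (\<Sum>i\<in>J. a i * \<xi> i \<omega>)\<^sup>2) = (\<Sum>i\<in>J. (a i)\<^sup>2)"
proof (rule expectation_square_sum_orthonormal)
  have meas_J [measurable]: "\<xi> i \<in> borel_measurable M" if "i \<in> J" for i
    using meas that \<open>J \<subseteq> I\<close> by blast
  have ae: "AE \<omega> in M. \<xi> i \<omega> = 1 \<or> \<xi> i \<omega> = -1" if "i \<in> J" for i
    using AE_Rademacher meas p1 pm1 that \<open>J \<subseteq> I\<close> by blast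
  have bounded: "integrable M (\<xi> i)" if "i \<in> J" for i
    by (rule integrable_const_bound[where B=1]) (use ae[OF that] that in auto)
  show "integrable M (\<lambda>\<omega>. \<xi> i \<omega> * \<xi> k \<omega>)" if "i \<in> J" "k \<in> J" for i k
  proof (rule integrable_const_bound[where B=1])
    from ae[OF that(1)] ae[OF that(2)] show "AE \<omega> in M. norm (\<xi> i \<omega> * \<xi> k \<omega>) \<le> 1"
      by eventually_elim auto
  qed (use that in auto)
  show "expectation (\<lambda>\<omega>. \<xi> i \<omega> * \<xi> k \<omega>) = (if i = k then 1 else 0)" if "i \<in> J" "k \<in> J" for i k
  proof (cases "i = k")
    case True
    have "expectation (\<lambda>\<omega>. \<xi> i \<omega> * \<xi> i \<omega>) = expectation (\<lambda>\<omega>. 1)"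
      using ae[OF that(1)] by (intro integral_cong_AE) (use that in auto)
    then show ?thesis
      using True by (simp add: prob_space)
  next
    case False
    have "indep_vars (\<lambda>_. borel) \<xi> {i, k}"
      by (rule indep_vars_subset[OF indep]) (use that \<open>J \<subseteq> I\<close> in auto)
    then have "expectation (\<lambda>\<omega>. \<Prod>j\<in>{i, k}. \<xi> j \<omega>) = (\<Prod>j\<in>{i, k}. expectation (\<xi> j))"
      by (intro indep_vars_lebesgue_integral) (use that bounded in auto)
    then show ?thesis
      using False that \<open>J \<subseteq> I\<close> expectation_Rademacher[OF meas p1 pm1] by (simp add: subsetD)
  qed
qed (use assms in auto)

lemma abs_interval_integral_le_weighted:
  fixes f w :: "real \<Rightarrow> real"
  assumes "a \<le> b" and w: "set_integrable lborel {a..b} w"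
    and bound: "\<And>x. x \<in> {a..b} \<Longrightarrow> \<bar>f x\<bar> \<le> B * w x" and "0 \<le> B"
  shows "\<bar>LBINT x=a..b. f x\<bar> \<le> B * (LBINT x=a..b. w x)"
proof -
  have as_integral: "(LBINT x=a..b. h x) = integral\<^sup>L lborel (\<lambda>x. indicator {a..b} x * h x)"
    for h :: "real \<Rightarrow> real"
    using \<open>a \<le> b\<close> by (simp add: interval_integral_Icc set_lebesgue_integral_def)
  have Bw: "integrable lborel (\<lambda>x. indicator {a..b} x * (B * w x))"
    using integrable_mult_right[OF w[unfolded set_integrable_def], of B] by (simp add: mult_ac)
  have "\<bar>integral\<^sup>L lborel (\<lambda>x. indicator {a..b} x * f x)\<bar>
      \<le> integral\<^sup>L lborel (\<lambda>x. indicator {a..b} x * (B * w x))"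
  proof (cases "integrable lborel (\<lambda>x. indicator {a..b} x * f x)")
    case True
    show ?thesis
      using Bochner_Integration.integral_norm_bound_integral[OF True Bw] bound
      by (simp add: indicator_def)
  next
    case False
    have "0 \<le> integral\<^sup>L lborel (\<lambda>x. indicator {a..b} x * (B * w x))"
      by (intro Bochner_Integration.integral_nonneg)
         (auto simp: indicator_def intro: order_trans[OF abs_ge_zero bound])
    then show ?thesis
      using False by (simp add: not_integrable_integral_eq)
  qed
  then show ?thesis
    by (simp add: as_integral mult.left_commute)
qed

lemma abs_interval_integral_le_const:
  fixes f :: "real \<Rightarrow> real"
  assumes "a \<le> b" and bound: "\<And>x. x \<in> {a..b} \<Longrightarrow> \<bar>f x\<bar> \<le> B"
  shows "\<bar>LBINT x=a..b. f x\<bar> \<le> B * (b - a)"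
proof -
  have "0 \<le> B"
    using bound[of a] \<open>a \<le> b\<close> by force
  moreover have "set_integrable lborel {a..b} (\<lambda>_. 1 :: real)"
    by (rule borel_integrable_atLeastAtMost') simp
  ultimately have "\<bar>LBINT x=a..b. f x\<bar> \<le> B * (LBINT x=a..b. 1)"
    using assms by (intro abs_interval_integral_le_weighted) auto
  then show ?thesis
    by (simp add: interval_integral_const)
qed

lemma set_integrable_powr_unit_interval:
  assumes "e > (-1::real)"
  shows "set_integrable lborel {0..1} (\<lambda>x::real. x powr e)"
proof -
  have "(\<lambda>x::real. x powr e) integrable_on {0..1}"
    by (rule integrable_on_powr_from_0) (use assms in auto)
  then have "(\<lambda>x::real. x powr e) absolutely_integrable_on {0..1}"
    by (subst absolutely_integrable_on_iff_nonneg) auto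
  then show ?thesis
    unfolding set_integrable_def by (subst (asm) integrable_completion) auto
qed

lemma powr_diff_ge:
  fixes g y :: real
  assumes "0 < g" "g \<le> 1" "0 \<le> y"
  shows "g * (y + 1) powr (g - 1) \<le> (y + 1) powr g - y powr g"
proof (cases "y = 0")
  case False
  then have "0 < y"
    using assms by simp
  have "\<exists>z. y < z \<and> z < y + 1 \<and> (y + 1) powr g - y powr g = ((y + 1) - y) * (g * z powr (g - 1))"
    by (rule MVT2) (use \<open>0 < y\<close> in \<open>auto intro!: has_real_derivative_powr\<close>)
  then obtain z where z: "y < z" "z < y + 1" "(y + 1) powr g - y powr g = g * z powr (g - 1)"
    by auto
  have "(y + 1) powr (g - 1) \<le> z powr (g - 1)"
    by (rule powr_mono2') (use z \<open>0 < y\<close> assms in auto)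
  then show ?thesis
    using z assms by simp
qed (use assms in simp)

lemma sum_powr_le:
  fixes g :: real
  assumes "0 < g" "g \<le> 1"
  shows "(\<Sum>j=1..k. real j powr (g - 1)) \<le> real k powr g / g"
proof (induction k)
  case (Suc k)
  have "(\<Sum>j=1..Suc k. real j powr (g - 1)) = (real k + 1) powr (g - 1) + (\<Sum>j=1..k. real j powr (g - 1))"
    by (simp add: add_ac)
  also have "\<dots> \<le> (real k + 1) powr (g - 1) + real k powr g / g"
    using Suc by simp
  also have "\<dots> \<le> real (Suc k) powr g / g"
  proof -
    have "(real k + 1) powr (g - 1) \<le> ((real k + 1) powr g - real k powr g) / g"
      using powr_diff_ge[OF assms, of "real k"] assms by (simp add: pos_le_divide_eq mult.commute)
    then show ?thesis
      by (simp add: diff_divide_distrib add_ac)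
  qed
  finally show ?case .
qed simp

lemma x_seq_le:
  assumes "1/2 < H" "H < 1" "n \<ge> 2"
  shows "x_seq H n \<le> 2/3 * (real n - 1)"
proof -
  define t where "t = 1 / (real n - 1)"
  define a where "a = 2 / (3 - 2 * H)"
  have t: "0 < t" "t \<le> 1"
    using assms by (auto simp: t_def)
  have a: "0 < a" "a \<le> 2"
    using assms by (auto simp: a_def field_simps)
  have "1 < (1 + t) powr a"
    using powr_less_mono[of 0 a "1 + t"] t a by simp
  moreover have "(1 + t) powr a - 1 \<le> 3 * t"
  proof -
    have "(1 + t) powr a \<le> (1 + t) powr 2"
      by (rule powr_mono) (use t a in auto)
    also have "\<dots> = 1 + 2 * t + t * t"
      using t by (simp add: power2_eq_square algebra_simps)
    also have "\<dots> \<le> 1 + 3 * t"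
      using t by (simp add: mult_left_le)
    finally show ?thesis
      by simp
  qed
  ultimately have "inverse (3 * t) \<le> inverse ((1 + t) powr a - 1)"
    by (intro le_imp_inverse_le) auto
  moreover have "inverse (3 * t) = (real n - 1) / 3"
    by (simp add: t_def)
  ultimately show ?thesis
    unfolding x_seq_def by (simp add: t_def a_def)
qed

lemma of_nat_le_x_seq:
  assumes "i \<in> {1..i_seq H n - 1}"
  shows "real i \<le> x_seq H n"
proof -
  have "int i \<le> \<lfloor>x_seq H n\<rfloor>"
    using assms by (auto simp: i_seq_def le_nat_iff)
  then show ?thesis
    by (simp add: le_floor_iff)
qed

text \<open>
  The kernel bound for \<open>v + n - 1 \<le> n\<close> and \<open>v + n - 1 - x \<ge> n/6\<close>; it equals
  \<open>6\<^bsup>3/2-H\<^esup> n\<^bsup>2H-2\<^esup>\<close>.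
\<close>
definition jnH_scale :: "real \<Rightarrow> nat \<Rightarrow> real" where
  "jnH_scale H n = real n powr (H - 1/2) * (real n / 6) powr (H - 3/2)"

text \<open>
  Bounds the weight \<open>x\<^bsup>1/2-H\<^esup>\<close> on \<open>[i - 1, i]\<close>: by its supremum for \<open>i \<ge> 2\<close>, and by its
  integral for \<open>i = 1\<close>, where it is unbounded.
\<close>
definition jnH_weight :: "real \<Rightarrow> nat \<Rightarrow> real" where
  "jnH_weight H i =
     (if i = 1 then (LBINT x=0..1. x powr (1/2 - H)) else (real i - 1) powr (1/2 - H))"

lemma abs_jnH_inner_le:
  assumes "1/2 < H" "H < 1" "n \<ge> 2" "0 \<le> x" "x \<le> 2/3 * (real n - 1)"
  shows "\<bar>LBINT v=0..1. (v + real n - 1) powr (H - 1/2) * (v + real n - 1 - x) powr (H - 3/2)\<bar>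
    \<le> jnH_scale H n"
proof -
  have "\<bar>LBINT v=0..1. (v + real n - 1) powr (H - 1/2) * (v + real n - 1 - x) powr (H - 3/2)\<bar>
      \<le> jnH_scale H n * (1 - 0)"
  proof (rule abs_interval_integral_le_const[of 0 1,
        simplified zero_ereal_def[symmetric] one_ereal_def[symmetric]])
    fix v :: real
    assume v: "v \<in> {0..1}"
    have "(v + real n - 1) powr (H - 1/2) \<le> real n powr (H - 1/2)"
      by (rule powr_mono2) (use v assms in auto)
    moreover have "(v + real n - 1 - x) powr (H - 3/2) \<le> (real n / 6) powr (H - 3/2)"
      by (rule powr_mono2') (use v assms in auto)
    ultimately show "\<bar>(v + real n - 1) powr (H - 1/2) * (v + real n - 1 - x) powr (H - 3/2)\<bar>
        \<le> jnH_scale H n"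
      unfolding jnH_scale_def by (simp add: mult_mono)
  qed simp
  then show ?thesis
    by simp
qed

lemma abs_jnH_le:
  assumes H: "1/2 < H" "H < 1" and "n \<ge> 2" "i \<ge> 1" "real i \<le> 2/3 * (real n - 1)"
  shows "\<bar>jnH \<sigma> H n i\<bar> \<le> \<bar>\<sigma> * C_H H\<bar> * jnH_scale H n * jnH_weight H i"
proof -
  define g where "g x = (LBINT v=0..1. (v + real n - 1) powr (H - 1/2) * (v + real n - 1 - x) powr (H - 3/2))"
    for x
  have g_bound: "\<bar>g x\<bar> \<le> jnH_scale H n" if "0 \<le> x" "x \<le> real i" for x
    unfolding g_def by (rule abs_jnH_inner_le) (use that assms in auto)
  have "0 \<le> jnH_scale H n"
    by (simp add: jnH_scale_def)
  have "\<bar>LBINT x=real i - 1..real i. x powr (1/2 - H) * g x\<bar> \<le> jnH_scale H n * jnH_weight H i"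
  proof (cases "i = 1")
    case True
    have "\<bar>LBINT x=0..1. x powr (1/2 - H) * g x\<bar> \<le> jnH_scale H n * (LBINT x=0..1. x powr (1/2 - H))"
    proof (rule abs_interval_integral_le_weighted[of 0 1,
          simplified zero_ereal_def[symmetric] one_ereal_def[symmetric]])
      show "set_integrable lborel {0..1} (\<lambda>x::real. x powr (1/2 - H))"
        by (rule set_integrable_powr_unit_interval) (use H in auto)
      show "\<bar>x powr (1/2 - H) * g x\<bar> \<le> jnH_scale H n * x powr (1/2 - H)" if "x \<in> {0..1}" for x
        using mult_left_mono[OF g_bound, of x "x powr (1/2 - H)"] that True
        by (simp add: abs_mult mult.commute)
    qed (use \<open>0 \<le> jnH_scale H n\<close> in auto)
    then show ?thesis
      using True by (simp add: jnH_weight_def zero_ereal_def[symmetric] one_ereal_def[symmetric])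
  next
    case False
    have "\<bar>LBINT x=real i - 1..real i. x powr (1/2 - H) * g x\<bar>
        \<le> (real i - 1) powr (1/2 - H) * jnH_scale H n * (real i - (real i - 1))"
    proof (rule abs_interval_integral_le_const)
      fix x :: real
      assume x: "x \<in> {real i - 1..real i}"
      have "x powr (1/2 - H) \<le> (real i - 1) powr (1/2 - H)"
        by (rule powr_mono2') (use x False \<open>i \<ge> 1\<close> H in auto)
      then show "\<bar>x powr (1/2 - H) * g x\<bar> \<le> (real i - 1) powr (1/2 - H) * jnH_scale H n"
        using g_bound[of x] x False \<open>i \<ge> 1\<close> by (auto simp: abs_mult intro!: mult_mono)
    qed simp
    then show ?thesis
      using False by (simp add: jnH_weight_def mult.commute)
  qed
  then show ?thesis
    by (simp add: jnH_def g_def abs_mult mult.assoc mult_left_mono)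
qed

lemma sum_jnH_weight_square_le:
  assumes "1/2 < H" "H < 1"
  shows "(\<Sum>i=1..m. (jnH_weight H i)\<^sup>2) \<le> (jnH_weight H 1)\<^sup>2 + real m powr (2 - 2*H) / (2 - 2*H)"
proof (cases m)
  case (Suc k)
  have square: "(jnH_weight H (Suc j))\<^sup>2 = real j powr ((2 - 2*H) - 1)" if "j \<ge> 1" for j
  proof -
    have "(jnH_weight H (Suc j))\<^sup>2 = real j powr (1/2 - H) * real j powr (1/2 - H)"
      using that by (simp add: jnH_weight_def power2_eq_square)
    also have "\<dots> = real j powr ((2 - 2*H) - 1)"
      by (simp flip: powr_add)
    finally show ?thesis .
  qed
  have "(\<Sum>i=1..m. (jnH_weight H i)\<^sup>2) = (jnH_weight H 1)\<^sup>2 + (\<Sum>i=Suc 1..Suc k. (jnH_weight H i)\<^sup>2)"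
    unfolding Suc by (rule sum.atLeast_Suc_atMost) simp
  also have "(\<Sum>i=Suc 1..Suc k. (jnH_weight H i)\<^sup>2) = (\<Sum>j=1..k. real j powr ((2 - 2*H) - 1))"
    unfolding sum.shift_bounds_cl_Suc_ivl by (rule sum.cong) (simp_all add: square)
  also have "(jnH_weight H 1)\<^sup>2 + (\<Sum>j=1..k. real j powr ((2 - 2*H) - 1))
      \<le> (jnH_weight H 1)\<^sup>2 + real k powr (2 - 2*H) / (2 - 2*H)"
    using sum_powr_le[of "2 - 2*H" k] assms by simp
  also have "\<dots> \<le> (jnH_weight H 1)\<^sup>2 + real m powr (2 - 2*H) / (2 - 2*H)"
    using Suc assms by (auto intro!: divide_right_mono powr_mono2)
  finally show ?thesis .
qed simp

lemma sum_jnH_square_le: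
  assumes "1/2 < H" "H < 1" "n \<ge> 2"
  shows "(\<Sum>i=1..i_seq H n - 1. (jnH \<sigma> H n i)\<^sup>2)
    \<le> (\<sigma> * C_H H)\<^sup>2 * (jnH_scale H n)\<^sup>2 * ((jnH_weight H 1)\<^sup>2 + real n powr (2 - 2*H) / (2 - 2*H))"
proof -
  define m where "m = i_seq H n - 1"
  have small_i: "real i \<le> 2/3 * (real n - 1)" if "i \<in> {1..m}" for i
    using of_nat_le_x_seq[of i H n] x_seq_le[OF assms] that by (simp add: m_def)
  have "(\<Sum>i=1..m. (jnH \<sigma> H n i)\<^sup>2) \<le> (\<Sum>i=1..m. (\<sigma> * C_H H)\<^sup>2 * (jnH_scale H n)\<^sup>2 * (jnH_weight H i)\<^sup>2)"
  proof (rule sum_mono)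
    fix i
    assume "i \<in> {1..m}"
    then have "\<bar>jnH \<sigma> H n i\<bar> \<le> \<bar>\<sigma> * C_H H\<bar> * jnH_scale H n * jnH_weight H i"
      using abs_jnH_le assms small_i by simp
    then have "\<bar>jnH \<sigma> H n i\<bar>\<^sup>2 \<le> (\<bar>\<sigma> * C_H H\<bar> * jnH_scale H n * jnH_weight H i)\<^sup>2"
      by (rule power_mono) simp
    then show "(jnH \<sigma> H n i)\<^sup>2 \<le> (\<sigma> * C_H H)\<^sup>2 * (jnH_scale H n)\<^sup>2 * (jnH_weight H i)\<^sup>2"
      by (simp add: power_mult_distrib)
  qed
  also have "\<dots> = (\<sigma> * C_H H)\<^sup>2 * (jnH_scale H n)\<^sup>2 * (\<Sum>i=1..m. (jnH_weight H i)\<^sup>2)"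
    by (simp add: sum_distrib_left)
  also have "\<dots> \<le> (\<sigma> * C_H H)\<^sup>2 * (jnH_scale H n)\<^sup>2 * ((jnH_weight H 1)\<^sup>2 + real n powr (2 - 2*H) / (2 - 2*H))"
  proof (intro mult_left_mono order.trans[OF sum_jnH_weight_square_le[OF assms(1,2)]])
    have "real m \<le> real n"
      using small_i[of m] by (cases "m = 0") auto
    then show "(jnH_weight H 1)\<^sup>2 + real m powr (2 - 2*H) / (2 - 2*H)
        \<le> (jnH_weight H 1)\<^sup>2 + real n powr (2 - 2*H) / (2 - 2*H)"
      using assms by (auto intro!: divide_right_mono powr_mono2)
  qed simp_all
  finally show ?thesis
    by (simp add: m_def)
qed

theorem proposition5p1:
  fixes M :: "'a measure" and \<xi> :: "nat \<Rightarrow> 'a \<Rightarrow> real" and H \<sigma> :: real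
  assumes "prob_space M"
    and "1/2 < H" and "H < 1" and "\<sigma> > 0"
    and "prob_space.indep_vars M (\<lambda>_. borel) \<xi> {1..}"
    and "\<And>i. i \<ge> 1 \<Longrightarrow> \<xi> i \<in> borel_measurable M"
    and "\<And>i. i \<ge> 1 \<Longrightarrow> \<P>(\<omega> in M. \<xi> i \<omega> = 1) = 1/2"
    and "\<And>i. i \<ge> 1 \<Longrightarrow> \<P>(\<omega> in M. \<xi> i \<omega> = -1) = 1/2"
  shows "(\<lambda>n. prob_space.expectation M (\<lambda>\<omega>. (Ybar \<sigma> H \<xi> n \<omega> - 0)\<^sup>2)) \<longlonglongrightarrow> 0"
proof -
  have second_moment: "prob_space.expectation M (\<lambda>\<omega>. (Ybar \<sigma> H \<xi> n \<omega> - 0)\<^sup>2)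
      = (\<Sum>i=1..i_seq H n - 1. (jnH \<sigma> H n i)\<^sup>2)" for n
    unfolding Ybar_def
    using prob_space.expectation_square_sum_Rademacher[OF assms(1,5), of "{1..i_seq H n - 1}"]
      assms(6-8) by simp
  define U where "U n = (\<sigma> * C_H H)\<^sup>2 * (jnH_scale H n)\<^sup>2
    * ((jnH_weight H 1)\<^sup>2 + real n powr (2 - 2*H) / (2 - 2*H))" for n
  have "\<forall>\<^sub>F n in sequentially. 0 \<le> (\<Sum>i=1..i_seq H n - 1. (jnH \<sigma> H n i)\<^sup>2)"
    by (intro always_eventually allI sum_nonneg) simp
  moreover have "\<forall>\<^sub>F n in sequentially. (\<Sum>i=1..i_seq H n - 1. (jnH \<sigma> H n i)\<^sup>2) \<le> U n"
    using eventually_ge_at_top[of 2] by eventually_elim (unfold U_def, rule sum_jnH_square_le[OF assms(2,3)])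
  moreover have "U \<longlonglongrightarrow> 0"
    unfolding U_def jnH_scale_def using assms(2,3) by real_asymp
  ultimately show ?thesis
    unfolding second_moment by (rule tendsto_sandwich[OF _ _ tendsto_const])
qed

end
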